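(* Let $\mu>0$, $a\in\left(-\frac{2\mu}{9},0\right)\cup\left(0,\frac{4\mu}{9}\right)$, $\alpha_0\in\mathbb{C}$, and let $\mathcal{A}(\cdot\,;a):[\frac{2\mu}{3},\infty)\to[0,\infty)$ be measurable, not almost everywhere zero, with $\int_{2\mu/3}^{\infty}\frac{ds'}{s'}\mathcal{A}(s';a)|\beta_1(a,s')|<\infty$. For $|\tilde z|<1$ define $\mathcal{T}(\tilde z,a):=\alpha_0+\frac{1}{\pi}\int_{2\mu/3}^{\infty}\frac{ds'}{s'}\,\mathcal{A}(s';a)\,H(s',\tilde z;a)$, and $\alpha_1(a)a^2:=\frac1\pi\int_{2\mu/3}^\infty\frac{ds'}{s'}\mathcal{A}(s';a)\beta_1(a,s')$, and $f(\tilde z,a):=\dfrac{\mathcal{T}(\tilde z,a)-\alpha_0}{\alpha_1(a)a^2}$. Then (1) $|f(\tilde z,a)|\le\dfrac{|\tilde z|}{(1-|\tilde z|)^2}$ for all $|\tilde z|<1$; (2) $|f(\tilde z,a)|\ge\dfrac{|\tilde z|}{(1+|\tilde z|)^2}$ for all real $\tilde z$ with $|\tilde z|<1$.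
   Context: For real $a$ and $s_1>0$ the crossing symmetric kernel is $H(s_1,\tilde z;a)=\dfrac{27a^2\tilde z\,(2s_1-3a)}{27a^3\tilde z-27a^2\tilde z s_1-(1-\tilde z)^2s_1^3}$, and $\beta_1(a,s_1)=\frac{27a^2}{s_1^3}(3a-2s_1)$ is its first Taylor coefficient in $\tilde z$ at $\tilde z=0$. (Physically $\mathcal{T}$ is the crossing symmetric dispersive representation of a unitary $2\to2$ scalar amplitude with $\mu=4m^2$ and $\mathcal{A}\ge0$ its absorptive part.) *)

theory Defs
  imports "HOL-Analysis.Analysis"
begin

definition beta1 :: "real \<Rightarrow> real \<Rightarrow> real" where
  "beta1 a t = 27 * a^2 / t^3 * (3*a - 2*t)"

definition Hker :: "real \<Rightarrow> complex \<Rightarrow> real \<Rightarrow> complex" where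
  "Hker t z a =
     (27 * of_real (a^2) * z * of_real (2*t - 3*a)) /
     (27 * of_real (a^3) * z - 27 * of_real (a^2) * z * of_real t - (1 - z)^2 * of_real (t^3))"

definition Tamp :: "real \<Rightarrow> complex \<Rightarrow> (real \<Rightarrow> real) \<Rightarrow> complex \<Rightarrow> real \<Rightarrow> complex" where
  "Tamp \<mu> \<alpha>0 A z a =
     \<alpha>0 + of_real (1/pi) *
       (LINT s:{2*\<mu>/3..}|lebesgue. of_real (A s / s) * Hker s z a)"

definition alpha1a2 :: "real \<Rightarrow> (real \<Rightarrow> real) \<Rightarrow> real \<Rightarrow> real" where
  "alpha1a2 \<mu> A a = (1/pi) * (LINT s:{2*\<mu>/3..}|lebesgue. A s / s * beta1 a s)"

definition fnorm :: "real \<Rightarrow> complex \<Rightarrow> (real \<Rightarrow> real) \<Rightarrow> complex \<Rightarrow> real \<Rightarrow> complex" where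
  "fnorm \<mu> \<alpha>0 A z a = (Tamp \<mu> \<alpha>0 A z a - \<alpha>0) / of_real (alpha1a2 \<mu> A a)"

end

theory Submission
  imports Defs
begin

(* For s >= 2 mu / 3 the kernel factors as H(s,z;a) = beta_1(a,s) z / (1 - 2 cos(theta) z + z^2)
   with cos(theta) = Hker_cos a s in [-1,1] and beta_1(a,s) < 0. So f is an average, with the
   nonnegative weight A |beta_1| / s, of the extremal typically real functions
   z / ((1 - e^(i theta) z) (1 - e^(-i theta) z)), and each of these obeys the Koebe bounds:
   the upper one because |1 - e^(+-i theta) z| >= 1 - |z|, the lower one on the real axis because
   there the kernel has the sign of x and 0 < 1 - 2 cos(theta) x + x^2 <= (1 + |x|)^2. *)

definition typically_real_kernel :: "real \<Rightarrow> complex \<Rightarrow> complex" where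
  "typically_real_kernel t z = z / (1 - 2 * of_real t * z + z^2)"

lemma typically_real_kernel_denom_factor:
  fixes t :: real and z :: complex
  assumes "\<bar>t\<bar> \<le> 1"
  obtains u where "cmod u = 1" "1 - 2 * of_real t * z + z^2 = (1 - u * z) * (1 - cnj u * z)"
proof
  define u where "u = Complex t (sqrt (1 - t^2))"
  have sq: "sqrt (1 - t^2) ^ 2 = 1 - t^2"
    using assms by (simp add: abs_square_le_1)
  show "cmod u = 1"
    unfolding u_def cmod_def using sq by simp
  then have "u * cnj u = 1"
    using complex_norm_square[of u] by simp
  moreover have "u + cnj u = 2 * of_real t"
    unfolding u_def by (simp add: complex_eq_iff)
  moreover have "(1 - u * z) * (1 - cnj u * z) = 1 - (u + cnj u) * z + (u * cnj u) * z^2"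
    by (simp add: algebra_simps power2_eq_square)
  ultimately show "1 - 2 * of_real t * z + z^2 = (1 - u * z) * (1 - cnj u * z)"
    by simp
qed

lemma norm_typically_real_kernel_le:
  assumes "\<bar>t\<bar> \<le> 1" "cmod z < 1"
  shows "cmod (typically_real_kernel t z) \<le> cmod z / (1 - cmod z)^2"
proof -
  obtain u where u: "cmod u = 1" "1 - 2 * of_real t * z + z^2 = (1 - u * z) * (1 - cnj u * z)"
    using typically_real_kernel_denom_factor assms(1) by blast
  have factor_ge: "1 - cmod z \<le> cmod (1 - v * z)" if "cmod v = 1" for v
    using norm_triangle_ineq2[of 1 "v * z"] that by (simp add: norm_mult)
  have "(1 - cmod z)^2 \<le> cmod (1 - u * z) * cmod (1 - cnj u * z)"
    unfolding power2_eq_square using assms(2) u(1)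
    by (intro mult_mono factor_ge) auto
  then have "(1 - cmod z)^2 \<le> cmod (1 - 2 * of_real t * z + z^2)"
    by (simp add: u(2) norm_mult)
  moreover have "0 < (1 - cmod z)^2"
    using assms(2) by simp
  ultimately show ?thesis
    unfolding typically_real_kernel_def norm_divide by (simp add: frac_le)
qed

lemma sgn_mult_Re_typically_real_kernel_ge:
  fixes t x :: real
  assumes "\<bar>t\<bar> \<le> 1" "\<bar>x\<bar> < 1"
  shows "\<bar>x\<bar> / (1 + \<bar>x\<bar>)^2 \<le> sgn x * Re (typically_real_kernel t (of_real x))"
proof -
  have "\<bar>2 * t * x\<bar> \<le> 2 * \<bar>x\<bar>"
    using assms(1) by (simp add: abs_mult mult_left_le_one_le)
  then have lower: "(1 - \<bar>x\<bar>)^2 \<le> 1 - 2 * t * x + x^2"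
    and upper: "1 - 2 * t * x + x^2 \<le> (1 + \<bar>x\<bar>)^2"
    by (auto simp: power2_eq_square algebra_simps abs_mult_self_eq)
  have "0 < (1 - \<bar>x\<bar>)^2"
    using assms(2) by simp
  then have "0 < 1 - 2 * t * x + x^2"
    using lower by linarith
  then have "\<bar>x\<bar> / (1 + \<bar>x\<bar>)^2 \<le> \<bar>x\<bar> / (1 - 2 * t * x + x^2)"
    using upper by (intro divide_left_mono mult_pos_pos) auto
  also have "\<dots> = sgn x * Re (typically_real_kernel t (of_real x))"
    unfolding typically_real_kernel_def by (simp add: abs_sgn flip: of_real_power of_real_mult of_real_diff)
  finally show ?thesis .
qed

lemma integrable_scaleR_bounded:
  fixes k :: "'a \<Rightarrow> 'b::{banach, second_countable_topology}"
  assumes "integrable M w" "k \<in> borel_measurable M" "\<And>s. s \<in> space M \<Longrightarrow> norm (k s) \<le> B"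
  shows "integrable M (\<lambda>s. w s *\<^sub>R k s)"
proof (rule Bochner_Integration.integrable_bound)
  show "integrable M (\<lambda>s. B * w s)"
    using assms(1) by simp
  have "norm (w s *\<^sub>R k s) \<le> norm (B * w s)" if "s \<in> space M" for s
  proof -
    have "norm (k s) \<le> \<bar>B\<bar>"
      using assms(3)[OF that] by linarith
    then have "\<bar>w s\<bar> * norm (k s) \<le> \<bar>w s\<bar> * \<bar>B\<bar>"
      by (simp add: mult_left_mono)
    then show ?thesis
      by (simp add: abs_mult mult.commute)
  qed
  then show "AE s in M. norm (w s *\<^sub>R k s) \<le> norm (B * w s)"
    by (rule AE_I2)
qed (use assms(1,2) in \<open>auto dest: borel_measurable_integrable\<close>)

lemma norm_integral_weighted_le:
  fixes k :: "'a \<Rightarrow> 'b::{banach, second_countable_topology}"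
  assumes "integrable M w" "\<And>s. s \<in> space M \<Longrightarrow> 0 \<le> w s"
    and "k \<in> borel_measurable M" "\<And>s. s \<in> space M \<Longrightarrow> norm (k s) \<le> B"
  shows "norm (\<integral>s. w s *\<^sub>R k s \<partial>M) \<le> B * integral\<^sup>L M w"
proof -
  have "norm (\<integral>s. w s *\<^sub>R k s \<partial>M) \<le> (\<integral>s. norm (w s *\<^sub>R k s) \<partial>M)"
    by (rule integral_norm_bound)
  also have "\<dots> \<le> (\<integral>s. B * w s \<partial>M)"
    using assms integrable_scaleR_bounded[OF assms(1,3,4)]
    by (intro integral_mono integrable_norm) (auto simp: mult.commute[of B] intro: mult_left_mono)
  finally show ?thesis
    by simp
qed

lemma norm_integral_weighted_ge:
  fixes k :: "'a \<Rightarrow> complex"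
  assumes "integrable M w" "\<And>s. s \<in> space M \<Longrightarrow> 0 \<le> w s"
    and "k \<in> borel_measurable M" "\<And>s. s \<in> space M \<Longrightarrow> norm (k s) \<le> B"
    and "cmod u \<le> 1" "\<And>s. s \<in> space M \<Longrightarrow> L \<le> Re (u * k s)"
  shows "L * integral\<^sup>L M w \<le> cmod (\<integral>s. w s *\<^sub>R k s \<partial>M)"
proof -
  have int: "integrable M (\<lambda>s. w s *\<^sub>R (u * k s))"
    using assms(3,4,5) by (intro integrable_scaleR_bounded[OF assms(1), where B = B])
      (auto simp: norm_mult intro: order_trans[OF mult_left_le_one_le])
  have "L * integral\<^sup>L M w = (\<integral>s. L * w s \<partial>M)"
    by simp
  also have "\<dots> \<le> (\<integral>s. Re (w s *\<^sub>R (u * k s)) \<partial>M)"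
    using assms integrable_Re[OF int]
    by (intro integral_mono) (auto simp: mult.commute[of L] intro: mult_left_mono)
  also have "\<dots> = Re (\<integral>s. w s *\<^sub>R (u * k s) \<partial>M)"
    by (rule integral_Re[OF int])
  also have "\<dots> = Re (u * (\<integral>s. w s *\<^sub>R k s \<partial>M))"
    by (simp flip: integral_mult_right_zero)
  also have "\<dots> \<le> cmod (\<integral>s. w s *\<^sub>R k s \<partial>M)"
    using assms(5) by (intro order_trans[OF complex_Re_le_cmod]) (simp add: norm_mult mult_left_le_one_le)
  finally show ?thesis .
qed

lemma integral_pos_of_not_AE_zero:
  fixes f :: "'a \<Rightarrow> real"
  assumes "integrable M f" "\<And>s. s \<in> space M \<Longrightarrow> 0 \<le> f s" "\<not> (AE s in M. f s = 0)"
  shows "0 < integral\<^sup>L M f"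
  using assms integral_nonneg_eq_0_iff_AE[OF assms(1)] integral_nonneg_AE[of f M]
  by (auto simp: order_less_le)

definition Hker_cos :: "real \<Rightarrow> real \<Rightarrow> real" where
  "Hker_cos a s = 1 - 27 * a^2 * (s - a) / (2 * s^3)"

lemma Hker_eq_beta1_kernel:
  assumes "s \<noteq> 0"
  shows "Hker s z a = of_real (beta1 a s) * typically_real_kernel (Hker_cos a s) z"
proof -
  have denom: "27 * of_real (a^3) * z - 27 * of_real (a^2) * z * of_real s - (1 - z)^2 * of_real (s^3)
      = - of_real (s^3) * (1 - 2 * of_real (Hker_cos a s) * z + z^2)"
    using assms by (simp add: Hker_cos_def field_simps power2_eq_square power3_eq_cube)
  have "of_real (beta1 a s) * z = 27 * of_real (a^2) * z * of_real (2 * s - 3 * a) / (- of_real (s^3))"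
    using assms by (simp add: beta1_def field_simps)
  then show ?thesis
    unfolding Hker_def denom typically_real_kernel_def divide_divide_eq_left[symmetric] times_divide_eq_right
    by simp
qed

lemma abs_Hker_cos_le_1:
  assumes "0 < s" "- s / 3 \<le> a" "a \<le> s"
  shows "\<bar>Hker_cos a s\<bar> \<le> 1"
proof -
  have "4 * s^3 - 27 * a^2 * (s - a) = (s + 3 * a) * (2 * s - 3 * a)^2"
    by (simp add: algebra_simps power2_eq_square power3_eq_cube)
  moreover have "0 \<le> s + 3 * a"
    using assms by simp
  ultimately have "27 * a^2 * (s - a) \<le> 4 * s^3"
    by (metis diff_ge_0_iff_ge zero_le_mult_iff zero_le_power2)
  moreover have "0 \<le> 27 * a^2 * (s - a)"
    using assms by simp
  ultimately show ?thesis
    using assms(1) by (simp add: Hker_cos_def abs_le_iff field_simps)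
qed

lemma beta1_neg:
  assumes "0 < s" "a \<noteq> 0" "3 * a < 2 * s"
  shows "beta1 a s < 0"
  using assms by (simp add: beta1_def mult_pos_neg divide_neg_pos)

lemma threshold_kernel_bounds:
  assumes "\<mu> > 0" "a \<in> {-2*\<mu>/9<..<0} \<union> {0<..<4*\<mu>/9}" "2*\<mu>/3 \<le> s"
  shows "0 < s" "\<bar>Hker_cos a s\<bar> \<le> 1" "beta1 a s < 0"
  using assms abs_Hker_cos_le_1[of s a] beta1_neg[of s a] by auto

lemma typically_real_kernel_Hker_cos_measurable:
  "(\<lambda>s. typically_real_kernel (Hker_cos a s) z) \<in> borel_measurable (lebesgue_on S)"
  unfolding typically_real_kernel_def Hker_cos_def
  by (intro measurable_restrict_space1 measurable_completion) simp

lemma fnorm_eq_weighted_average: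
  assumes "\<mu> > 0" "a \<in> {-2*\<mu>/9<..<0} \<union> {0<..<4*\<mu>/9}"
  shows "fnorm \<mu> \<alpha>0 A z a =
    (\<integral>s. (A s / s * \<bar>beta1 a s\<bar>) *\<^sub>R typically_real_kernel (Hker_cos a s) z \<partial>lebesgue_on {2*\<mu>/3..})
      / of_real (\<integral>s. A s / s * \<bar>beta1 a s\<bar> \<partial>lebesgue_on {2*\<mu>/3..})"
proof -
  let ?M = "lebesgue_on {2*\<mu>/3..}"
  have restrict: "set_lebesgue_integral lebesgue {2*\<mu>/3..} f = integral\<^sup>L ?M f"
    for f :: "real \<Rightarrow> 'b::{banach, second_countable_topology}"
    unfolding set_lebesgue_integral_def by (rule integral_restrict_space[symmetric]) simp
  have "integral\<^sup>L ?M (\<lambda>s. of_real (A s / s) * Hker s z a)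
      = - (\<integral>s. (A s / s * \<bar>beta1 a s\<bar>) *\<^sub>R typically_real_kernel (Hker_cos a s) z \<partial>?M)"
    using threshold_kernel_bounds[OF assms]
    by (subst integral_minus[symmetric], intro Bochner_Integration.integral_cong)
       (auto simp: Hker_eq_beta1_kernel scaleR_conv_of_real abs_of_neg)
  moreover have "integral\<^sup>L ?M (\<lambda>s. A s / s * beta1 a s) = - integral\<^sup>L ?M (\<lambda>s. A s / s * \<bar>beta1 a s\<bar>)"
    using threshold_kernel_bounds[OF assms]
    by (subst integral_minus[symmetric], intro Bochner_Integration.integral_cong) (auto simp: abs_of_neg)
  ultimately show ?thesis
    unfolding fnorm_def Tamp_def alpha1a2_def restrict by simp
qed

lemma weight_integrable_pos:
  assumes "\<mu> > 0" "a \<in> {-2*\<mu>/9<..<0} \<union> {0<..<4*\<mu>/9}"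
    and "\<forall>s\<in>{2*\<mu>/3..}. A s \<ge> 0"
    and "\<not> (AE s in lebesgue_on {2*\<mu>/3..}. A s = 0)"
    and "set_integrable lebesgue {2*\<mu>/3..} (\<lambda>s. A s / s * \<bar>beta1 a s\<bar>)"
  shows "integrable (lebesgue_on {2*\<mu>/3..}) (\<lambda>s. A s / s * \<bar>beta1 a s\<bar>)"
    and "0 < (\<integral>s. A s / s * \<bar>beta1 a s\<bar> \<partial>lebesgue_on {2*\<mu>/3..})"
proof -
  let ?M = "lebesgue_on {2*\<mu>/3..}"
  show int: "integrable ?M (\<lambda>s. A s / s * \<bar>beta1 a s\<bar>)"
    using assms(5) by (simp add: set_integrable_eq)
  have weight_pos: "0 < \<bar>beta1 a s\<bar> / s" if "s \<in> space ?M" for s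
    using that threshold_kernel_bounds[OF assms(1,2), of s] by (simp add: divide_neg_pos)
  have "\<not> (AE s in ?M. A s / s * \<bar>beta1 a s\<bar> = 0)"
  proof
    assume "AE s in ?M. A s / s * \<bar>beta1 a s\<bar> = 0"
    with AE_space have "AE s in ?M. A s = 0"
      by eventually_elim (use weight_pos in fastforce)
    then show False
      using assms(4) by blast
  qed
  then show "0 < integral\<^sup>L ?M (\<lambda>s. A s / s * \<bar>beta1 a s\<bar>)"
    using assms(3) threshold_kernel_bounds(1)[OF assms(1,2)]
    by (intro integral_pos_of_not_AE_zero[OF int]) (auto intro!: divide_nonneg_pos)
qed

theorem mainTheorem8:
  fixes \<mu> a :: real and \<alpha>0 :: complex and A :: "real \<Rightarrow> real"
  assumes "\<mu> > 0"
    and "a \<in> {-2*\<mu>/9<..<0} \<union> {0<..<4*\<mu>/9}"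
    and "A \<in> borel_measurable (lebesgue_on {2*\<mu>/3..})"
    and "\<forall>s\<in>{2*\<mu>/3..}. A s \<ge> 0"
    and "\<not> (AE s in lebesgue_on {2*\<mu>/3..}. A s = 0)"
    and "set_integrable lebesgue {2*\<mu>/3..} (\<lambda>s. A s / s * \<bar>beta1 a s\<bar>)"
  shows "(\<forall>z::complex. cmod z < 1 \<longrightarrow>
            cmod (fnorm \<mu> \<alpha>0 A z a) \<le> cmod z / (1 - cmod z)^2)
       \<and> (\<forall>x::real. \<bar>x\<bar> < 1 \<longrightarrow>
            cmod (fnorm \<mu> \<alpha>0 A (of_real x) a) \<ge> \<bar>x\<bar> / (1 + \<bar>x\<bar>)^2)"
proof -
  let ?M = "lebesgue_on {2*\<mu>/3..}"
  define w where "w s = A s / s * \<bar>beta1 a s\<bar>" for s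
  define k where "k z s = typically_real_kernel (Hker_cos a s) z" for z s
  have w_int: "integrable ?M w" and w_pos: "0 < integral\<^sup>L ?M w"
    using weight_integrable_pos[OF assms(1,2,4,5,6)] unfolding w_def by auto
  have w_nonneg: "0 \<le> w s" and t_bound: "\<bar>Hker_cos a s\<bar> \<le> 1" if "s \<in> space ?M" for s
    using that assms(4) threshold_kernel_bounds(1,2)[OF assms(1,2), of s] unfolding w_def
    by (auto intro!: mult_nonneg_nonneg divide_nonneg_pos)
  have k_meas: "k z \<in> borel_measurable ?M" for z
    unfolding k_def by (rule typically_real_kernel_Hker_cos_measurable)
  have f_eq: "fnorm \<mu> \<alpha>0 A z a = (\<integral>s. w s *\<^sub>R k z s \<partial>?M) / of_real (integral\<^sup>L ?M w)" for z
    unfolding w_def k_def by (rule fnorm_eq_weighted_average[OF assms(1,2)])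
  have "cmod (fnorm \<mu> \<alpha>0 A z a) \<le> cmod z / (1 - cmod z)^2" if "cmod z < 1" for z
  proof -
    have "cmod (\<integral>s. w s *\<^sub>R k z s \<partial>?M) \<le> cmod z / (1 - cmod z)^2 * integral\<^sup>L ?M w"
      using that t_bound
      by (intro norm_integral_weighted_le[OF w_int w_nonneg k_meas]) (auto simp: k_def norm_typically_real_kernel_le)
    then show ?thesis
      using w_pos by (simp add: f_eq norm_divide divide_le_eq)
  qed
  moreover have "\<bar>x\<bar> / (1 + \<bar>x\<bar>)^2 \<le> cmod (fnorm \<mu> \<alpha>0 A (of_real x) a)" if "\<bar>x\<bar> < 1" for x
  proof -
    have "\<bar>x\<bar> / (1 + \<bar>x\<bar>)^2 * integral\<^sup>L ?M w \<le> cmod (\<integral>s. w s *\<^sub>R k (of_real x) s \<partial>?M)"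
      using that t_bound norm_typically_real_kernel_le[of _ "of_real x"]
      by (intro norm_integral_weighted_ge[OF w_int w_nonneg k_meas, where u = "of_real (sgn x)"])
         (auto simp: k_def sgn_mult_Re_typically_real_kernel_ge)
    then show ?thesis
      using w_pos by (simp add: f_eq norm_divide le_divide_eq)
  qed
  ultimately show ?thesis
    by blast
qed

end
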